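(* Let $b\geq 2$ be an integer. For Lebesgue almost every angle $\alpha\in\mathbb{T}$ the following two properties hold simultaneously: (1) for every point $\xi\in\alpha+K$, one has $0\leq v_b(\xi)\leq\frac{\kappa}{1-\kappa}$; (2) for every real number $v\in[0,\kappa/(1-\kappa)]$, one has $\dim_H(\mathcal{V}_b(v)\cap(\alpha+K))\leq\frac{1}{v+1}+\kappa-1$.
   Context: $\mathbb{T}=\mathbb{R}/\mathbb{Z}$ is the circle, identified with $[0,1)$. $K$ denotes the image in $\mathbb{T}$ of the middle-third Cantor set $\{\sum_{i\ge1}a_i3^{-i}: a_i\in\{0,2\}\}$, and $\kappa=\log 2/\log 3$; $\alpha+K$ is the rotation of $K$ by $\alpha$. For an irrational real $\xi$, $v_b(\xi)=\sup\{v\in\mathbb{R}: \|b^j\xi\|<b^{-vj}\text{ for infinitely many }j\in\mathbb{N}\}$, where $\|\cdot\|$ is the distance to the nearest integer; for rational $\xi$, $v_b(\xi)=0$ (this is 1-periodic, hence defined on $\mathbb{T}$). For $v\ge0$, $\mathcal{V}_b(v)=\{\xi\in\mathbb{T}: v_b(\xi)\geq v\}$. $\dim_H$ is Hausdorff dimension, with $\dim_H\emptyset=-\infty$. *)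

theory Defs
  imports "HOL-Analysis.Analysis"
begin

definition dist_int :: "real \<Rightarrow> real" where
  "dist_int x = \<bar>x - of_int (round x)\<bar>"

text \<open>The circle T = R/Z is identified with [0,1); reduction is frac.\<close>
definition circle :: "real set" where
  "circle = {0..<1}"

definition cantor_set :: "real set" where
  "cantor_set = {(\<Sum>i. a i / 3 ^ (Suc i)) | a :: nat \<Rightarrow> real. \<forall>i. a i \<in> {0, 2}}"

definition cantorK :: "real set" where
  "cantorK = frac ` cantor_set"

definition kappa :: real where
  "kappa = ln 2 / ln 3"

definition rotate :: "real \<Rightarrow> real set \<Rightarrow> real set" where
  "rotate \<alpha> A = (\<lambda>x. frac (\<alpha> + x)) ` A"

definition vb :: "nat \<Rightarrow> real \<Rightarrow> ereal" where
  "vb b \<xi> = (if \<xi> \<in> \<rat> then 0 else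
     Sup {ereal v | v. infinite {j :: nat. dist_int (real b ^ j * \<xi>) < real b powr (- v * real j)}})"

definition Vb :: "nat \<Rightarrow> real \<Rightarrow> real set" where
  "Vb b v = {\<xi> \<in> circle. vb b \<xi> \<ge> ereal v}"

definition hausdorff_pre :: "real \<Rightarrow> real \<Rightarrow> real set \<Rightarrow> ennreal" where
  "hausdorff_pre s \<delta> E = Inf {(\<Sum>i. ennreal (diameter (U i) powr s)) | U :: nat \<Rightarrow> real set.
       E \<subseteq> (\<Union>i. U i) \<and> (\<forall>i. bounded (U i) \<and> diameter (U i) \<le> \<delta>)}"

definition hausdorff_measure :: "real \<Rightarrow> real set \<Rightarrow> ennreal" where
  "hausdorff_measure s E = (SUP \<delta>\<in>{0<..}. hausdorff_pre s \<delta> E)"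

text \<open>Hausdorff dimension, with dim of the empty set = -infinity.
  Only s > 0 is used (for s > 0 the convention 0 powr s = 0 is the correct one).\<close>
definition hausdorff_dim :: "real set \<Rightarrow> ereal" where
  "hausdorff_dim E = (if E = {} then - \<infinity>
     else Inf {ereal s | s. 0 < s \<and> hausdorff_measure s E = 0})"

end

theory Submission
  imports Defs "HOL-Library.Nat_Bijection"
begin

text \<open>
  Fix rationals w > -1 and s \<ge> 0. At scale j, cover K by its 2^n triadic cylinders of level
  n \<approx> (1 + w) log_3 b^j, each of length 3^-n \<approx> b^-(1+w)j. If \<xi> = \<alpha> + x with x in the
  m-th cylinder satisfies \<parallel>b^j \<xi>\<parallel> < b^-wj, then \<alpha> lies in a set of measure O(b^-wj) that
  depends only on j and m. Weighting each cylinder hit in this way by the s-th power of its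
  length, the expected total weight at scale j is O(b^((1+w)(\<kappa>-s)-w)j), so if
  (1+w)(\<kappa>-s) < w the weights are summable over j for almost every \<alpha>, simultaneously for all
  rational (w, s). For s = 0 this leaves only finitely many scales with a hit, whence
  v_b \<le> \<kappa>/(1-\<kappa>) on \<alpha> + K. For s > 0 and w < v the cylinders hit at scales j \<ge> J cover
  V_b(v) \<inter> (\<alpha> + K), and the tail of the summable weights bounds their s-dimensional mass,
  so this set has Hausdorff dimension at most 1/(v+1) + \<kappa> - 1.
\<close>

lemma dist_int_le_half: "dist_int x \<le> 1/2"
  unfolding dist_int_def using of_int_round_abs_le[of x] by linarith

lemma dist_int_le_dist_of_int: "dist_int x \<le> \<bar>x - of_int p\<bar>"
proof (cases "\<bar>x - of_int p\<bar> < 1/2")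
  case True
  have "\<bar>of_int p - of_int (round x)\<bar> < (1::real)"
    using True of_int_round_abs_le[of x] by linarith
  hence "p = round x" by linarith
  thus ?thesis unfolding dist_int_def by simp
next
  case False thus ?thesis using dist_int_le_half[of x] by linarith
qed

lemma dist_int_le_add_dist: "dist_int x \<le> dist_int y + \<bar>x - y\<bar>"
proof -
  have "dist_int x \<le> \<bar>x - of_int (round y)\<bar>" by (rule dist_int_le_dist_of_int)
  also have "\<dots> \<le> \<bar>x - y\<bar> + dist_int y" unfolding dist_int_def by linarith
  finally show ?thesis by simp
qed

lemma dist_int_add_of_int [simp]: "dist_int (x + of_int k) = dist_int x"
  using dist_int_le_dist_of_int[of "x + of_int k" "round x + k"]
    dist_int_le_dist_of_int[of x "round (x + of_int k) - k"]
  unfolding dist_int_def by simp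

lemma borel_measurable_dist_int [measurable]: "dist_int \<in> borel_measurable borel"
  unfolding dist_int_def round_def by measurable

lemma emeasure_dist_int_lt_le:
  fixes n :: nat and c r :: real
  assumes "n \<ge> 1" "r > 0"
  shows "emeasure lborel {\<alpha> \<in> {0..<1}. dist_int (real n * (\<alpha> + c)) < r} \<le> ennreal (8 * r)"
proof -
  define I where "I = (\<lambda>p::int. {(of_int p - r) / n - c <..< (of_int p + r) / n - c})"
  define P where "P = {\<lfloor>n * c\<rfloor> - 1 .. \<lfloor>n * c\<rfloor> + int n + 1}"
  have n: "real n \<ge> 1" using assms(1) by simp
  have "{\<alpha> \<in> {0..<1}. dist_int (real n * (\<alpha> + c)) < r} \<subseteq> (\<Union>p\<in>P. I p)"
  proof
    fix \<alpha> assume "\<alpha> \<in> {\<alpha> \<in> {0..<1}. dist_int (real n * (\<alpha> + c)) < r}"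
    hence \<alpha>: "0 \<le> \<alpha>" "\<alpha> < 1" and d: "dist_int (n * (\<alpha> + c)) < r" by auto
    define y where "y = n * (\<alpha> + c)"
    have y: "n * c \<le> y" "y < n * c + n" unfolding y_def using \<alpha> n by (auto simp: algebra_simps)
    have "round y \<in> P"
      using y of_int_round_ge[of y] of_int_round_le[of y] floor_le_iff[of "n * c" "round y + 1"]
        le_floor_iff[of "round y - int n - 1" "n * c"]
      unfolding P_def by simp
    moreover have "\<alpha> \<in> I (round y)"
      using d n unfolding I_def dist_int_def y_def[symmetric]
      by (auto simp: y_def field_simps abs_less_iff)
    ultimately show "\<alpha> \<in> (\<Union>p\<in>P. I p)" by blast
  qed
  hence "emeasure lborel {\<alpha> \<in> {0..<1}. dist_int (real n * (\<alpha> + c)) < r} \<le> emeasure lborel (\<Union>p\<in>P. I p)"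
    by (intro emeasure_mono) (auto simp: I_def)
  also have "\<dots> \<le> (\<Sum>p\<in>P. emeasure lborel (I p))"
    by (intro emeasure_subadditive_finite) (auto simp: P_def I_def)
  also have "\<dots> = (\<Sum>p\<in>P. ennreal (2 * r / n))"
    using assms n by (intro sum.cong refl) (simp add: I_def divide_right_mono field_simps)
  also have "\<dots> = ennreal (card P * (2 * r / n))"
    using assms
    by (simp add: ennreal_of_nat_eq_real_of_nat ennreal_mult[symmetric] del: times_divide_eq_right)
  also have "real (card P) = n + 3" unfolding P_def by simp
  also have "(n + 3) * (2 * r / n) \<le> 8 * r"
    using assms n by (simp add: field_simps)
  finally show ?thesis by (simp add: ennreal_leI order_trans)
qed

section \<open>Hausdorff measure and dimension from covers\<close>

lemma hausdorff_pre_le_double_cover: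
  fixes V :: "nat \<Rightarrow> nat \<Rightarrow> real set"
  assumes "E \<subseteq> (\<Union>j k. V j k)" "\<And>j k. bounded (V j k) \<and> diameter (V j k) \<le> \<delta>"
  shows "hausdorff_pre s \<delta> E \<le> (\<Sum>j. \<Sum>k. ennreal (diameter (V j k) powr s))"
proof -
  define U where "U i = case_prod V (prod_decode i)" for i
  have "E \<subseteq> (\<Union>i. U i)"
  proof
    fix x assume "x \<in> E"
    then obtain j k where "x \<in> V j k" using assms(1) by blast
    hence "x \<in> U (prod_encode (j, k))" unfolding U_def by simp
    thus "x \<in> (\<Union>i. U i)" by blast
  qed
  moreover have "\<forall>i. bounded (U i) \<and> diameter (U i) \<le> \<delta>"
    unfolding U_def using assms(2) by (simp split: prod.split)
  ultimately have "hausdorff_pre s \<delta> E \<le> (\<Sum>i. ennreal (diameter (U i) powr s))"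
    unfolding hausdorff_pre_def by (intro Inf_lower) blast
  also have "\<dots> = (\<integral>\<^sup>+i. ennreal (diameter (case_prod V (prod_decode i)) powr s) \<partial>count_space UNIV)"
    by (simp add: U_def nn_integral_count_space_nat)
  also have "\<dots> = (\<integral>\<^sup>+x. ennreal (diameter (case_prod V x) powr s) \<partial>count_space UNIV)"
    by (rule nn_integral_bij_count_space) (rule bij_prod_decode)
  also have "\<dots> = (\<Sum>j. \<Sum>k. ennreal (diameter (V j k) powr s))"
    by (simp add: nn_integral_fst_count_space[symmetric] nn_integral_count_space_nat)
  finally show ?thesis .
qed

lemma hausdorff_measure_eq_0I:
  assumes "\<And>\<delta> \<epsilon>. \<delta> > 0 \<Longrightarrow> \<epsilon> > 0 \<Longrightarrow> hausdorff_pre s \<delta> E \<le> ennreal \<epsilon>"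
  shows "hausdorff_measure s E = 0"
proof -
  have "hausdorff_pre s \<delta> E = 0" if "\<delta> > 0" for \<delta>
  proof (rule antisym[OF ennreal_le_epsilon zero_le])
    fix \<epsilon> :: real assume "0 < \<epsilon>"
    thus "hausdorff_pre s \<delta> E \<le> 0 + ennreal \<epsilon>" using assms[OF that] by simp
  qed
  hence "(SUP \<delta>\<in>{0<..}. hausdorff_pre s \<delta> E) = (SUP \<delta>\<in>{(0::real)<..}. (0::ennreal))"
    by (intro SUP_cong) auto
  thus ?thesis unfolding hausdorff_measure_def by simp
qed

lemma hausdorff_dim_le_if_rat_null:
  assumes "0 \<le> c" "\<And>s. s \<in> \<rat> \<Longrightarrow> c < s \<Longrightarrow> hausdorff_measure s E = 0"
  shows "hausdorff_dim E \<le> ereal c"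
proof (cases "E = {}")
  case False
  have "Inf {ereal s | s. 0 < s \<and> hausdorff_measure s E = 0} \<le> ereal c"
    unfolding Inf_le_iff
  proof (intro allI impI)
    fix y assume "ereal c < y"
    then obtain t where t: "c < t" "ereal t < y" using ereal_dense2 by (metis less_ereal.simps(1))
    then obtain s where s: "s \<in> \<rat>" "c < s" "s < t" using Rats_dense_in_real by blast
    hence "ereal s \<in> {ereal s | s. 0 < s \<and> hausdorff_measure s E = 0}"
      using assms by force
    moreover have "ereal s < y" using s(3) t(2) by (metis less_ereal.simps(1) order_less_trans)
    ultimately show "\<exists>a\<in>{ereal s | s. 0 < s \<and> hausdorff_measure s E = 0}. a < y" by blast
  qed
  thus ?thesis unfolding hausdorff_dim_def using False by simp
qed (simp add: hausdorff_dim_def)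

lemma vb_nonneg:
  assumes "b \<ge> 2"
  shows "0 \<le> vb b \<xi>"
proof (cases "\<xi> \<in> \<rat>")
  case False
  have "{j :: nat. dist_int (real b ^ j * \<xi>) < real b powr (- 0 * real j)} = UNIV"
    using assms dist_int_le_half by (auto intro: le_less_trans[of _ "1/2"])
  hence "ereal 0 \<le> Sup {ereal v | v. infinite {j :: nat. dist_int (real b ^ j * \<xi>) < real b powr (- v * real j)}}"
    by (intro Sup_upper) auto
  thus ?thesis using False unfolding vb_def by (simp add: zero_ereal_def)
qed (simp add: vb_def)

lemma infinite_approximations_if_less_vb:
  assumes "b \<ge> 2" "ereal w < vb b \<xi>"
  shows "infinite {j. dist_int (real b ^ j * \<xi>) < real b powr (- w * real j)}"
proof (cases "\<xi> \<in> \<rat>")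
  case True
  hence "w < 0" using assms(2) unfolding vb_def by simp
  have "dist_int (real b ^ j * \<xi>) < real b powr (- w * real j)" for j
  proof -
    have "1 \<le> real b powr (- w * real j)"
      using assms(1) \<open>w < 0\<close> by (intro ge_one_powr_ge_zero) (auto simp: mult_nonpos_nonneg)
    thus ?thesis using dist_int_le_half[of "real b ^ j * \<xi>"] by linarith
  qed
  thus ?thesis by simp
next
  case False
  hence "ereal w < Sup {ereal v | v. infinite {j :: nat. dist_int (real b ^ j * \<xi>) < real b powr (- v * real j)}}"
    using assms(2) unfolding vb_def by simp
  then obtain u where u: "w < u"
    "infinite {j :: nat. dist_int (real b ^ j * \<xi>) < real b powr (- u * real j)}"
    unfolding less_Sup_iff by auto
  have "real b powr (- u * real j) \<le> real b powr (- w * real j)" for j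
    using assms(1) u(1) by (intro powr_mono) (auto intro: mult_right_mono)
  hence "{j. dist_int (real b ^ j * \<xi>) < real b powr (- u * real j)}
      \<subseteq> {j. dist_int (real b ^ j * \<xi>) < real b powr (- w * real j)}"
    by (auto intro: less_le_trans)
  thus ?thesis using u(2) finite_subset by blast
qed

lemma kappa_pos: "0 < kappa" and kappa_less_1: "kappa < 1"
  unfolding kappa_def by (auto simp: divide_less_eq)

lemma dim_bound_nonneg:
  assumes "0 \<le> v" "v \<le> kappa / (1 - kappa)"
  shows "0 \<le> 1 / (v + 1) + kappa - 1"
proof -
  have "(1 - kappa) * (v + 1) \<le> (1 - kappa) * (kappa / (1 - kappa) + 1)"
    using assms kappa_less_1 by (intro mult_left_mono) auto
  also have "\<dots> = 1" using kappa_less_1 by (simp add: field_simps)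
  finally show ?thesis using assms(1) by (simp add: field_simps)
qed

lemma rat_exponent_below:
  assumes "0 \<le> v" "1 / (v + 1) + kappa - 1 < s"
  obtains w where "w \<in> \<rat>" "-1 < w" "w < v" "(1 + w) * (kappa - s) < w"
proof -
  have s_gt: "1 / (v + 1) < s - kappa + 1" using assms(2) by simp
  have s_pos: "0 < s - kappa + 1" using s_gt assms(1) by (smt (verit) divide_pos_pos)
  have "1 / (s - kappa + 1) < v + 1"
    using s_gt s_pos assms(1) by (simp add: field_simps divide_less_eq less_divide_eq)
  then obtain w where w: "w \<in> \<rat>" "1 / (s - kappa + 1) - 1 < w" "w < v"
    using Rats_dense_in_real[of "1 / (s - kappa + 1) - 1" v] by auto
  have "1 / (s - kappa + 1) < 1 + w" using w(2) by simp
  hence "1 < (1 + w) * (s - kappa + 1)" using s_pos by (simp add: divide_less_eq)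
  hence "(1 + w) * (kappa - s) < w" by (simp add: algebra_simps)
  moreover have "-1 < w" using w(2) s_pos by (smt (verit) divide_pos_pos)
  ultimately show ?thesis using that w(1,3) by blast
qed

section \<open>Triadic cylinders of the Cantor set\<close>

text \<open>Left endpoint of the m-th cylinder of level n: the binary digits of m, least significant
  first, select the ternary digits 0 or 2 from the n-th backwards.\<close>

fun cantor_cyl :: "nat \<Rightarrow> nat \<Rightarrow> real" where
  "cantor_cyl 0 m = 0"
| "cantor_cyl (Suc n) m = cantor_cyl n (m div 2) + (if odd m then 2 / 3 ^ Suc n else 0)"

lemma cantor_partial_sum_eq_cantor_cyl:
  assumes "\<forall>i. a i \<in> {0, 2::real}"
  shows "\<exists>m < 2 ^ n. cantor_cyl n m = (\<Sum>i<n. a i / 3 ^ Suc i)"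
proof (induction n)
  case (Suc n)
  then obtain m where m: "m < 2 ^ n" "cantor_cyl n m = (\<Sum>i<n. a i / 3 ^ Suc i)" by auto
  define m' where "m' = 2 * m + (if a n = 2 then 1 else 0)"
  have "m' < 2 ^ Suc n" "m' div 2 = m" "odd m' \<longleftrightarrow> a n = 2"
    using m(1) unfolding m'_def by auto
  thus ?case using m(2) assms by (intro exI[of _ m']) auto
qed simp

lemma cantor_set_in_cylinder:
  assumes "x \<in> cantor_set"
  shows "\<exists>m < 2 ^ n. cantor_cyl n m \<le> x \<and> x \<le> cantor_cyl n m + (1/3) ^ n"
proof -
  obtain a where a: "\<forall>i. a i \<in> {0, 2::real}" and x: "x = (\<Sum>i. a i / 3 ^ Suc i)"
    using assms unfolding cantor_set_def by auto
  have a_bounds: "0 \<le> a i / 3 ^ Suc i" "a i / 3 ^ Suc i \<le> 2 / 3 ^ Suc i" for i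
    using a[rule_format, of i] by auto
  have tail_sums: "(\<lambda>i. 2 / 3 ^ Suc (i + k)) sums ((1/3::real) ^ k)" for k
  proof -
    have "(\<lambda>i. (2/3) * (1/3) ^ k * (1/3::real) ^ i) sums ((2/3) * (1/3) ^ k * (1 / (1 - 1/3)))"
      by (intro sums_mult geometric_sums) auto
    thus ?thesis by (simp add: power_add power_divide field_simps)
  qed
  have "summable (\<lambda>i. 2 / 3 ^ Suc i :: real)"
    using sums_summable[OF tail_sums[of 0]] by simp
  hence summable_a: "summable (\<lambda>i. a i / 3 ^ Suc i)"
    by (rule summable_comparison_test'[where N = 0]) (metis a_bounds abs_of_nonneg real_norm_def)
  obtain m where m: "m < 2 ^ n" "cantor_cyl n m = (\<Sum>i<n. a i / 3 ^ Suc i)"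
    using cantor_partial_sum_eq_cantor_cyl[OF a] by blast
  have split: "x = cantor_cyl n m + (\<Sum>i. a (i + n) / 3 ^ Suc (i + n))"
    using suminf_split_initial_segment[OF summable_a, of n] m(2) x by simp
  have "0 \<le> (\<Sum>i. a (i + n) / 3 ^ Suc (i + n))"
    using a_bounds by (intro suminf_nonneg summable_ignore_initial_segment[OF summable_a]) auto
  moreover have "(\<Sum>i. a (i + n) / 3 ^ Suc (i + n)) \<le> (1/3) ^ n"
    using summable_sums[OF summable_ignore_initial_segment[OF summable_a]] tail_sums[of n]
    by (rule sums_le[rotated]) (rule a_bounds(2))
  ultimately show ?thesis using m(1) split by (intro exI[of _ m]) auto
qed

lemma rotate_cantorK_cases:
  assumes "0 \<le> \<alpha>" "\<alpha> < 1" "\<xi> \<in> rotate \<alpha> cantorK"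
  obtains x k where "x \<in> cantor_set" "k \<in> {0, 1::int}" "\<xi> = \<alpha> + x - of_int k"
proof -
  obtain x where x: "x \<in> cantor_set" and \<xi>: "\<xi> = frac (\<alpha> + frac x)"
    using assms(3) unfolding rotate_def cantorK_def by auto
  define k where "k = \<lfloor>x\<rfloor> + \<lfloor>\<alpha> + frac x\<rfloor>"
  have e: "\<xi> = \<alpha> + x - of_int k" unfolding \<xi> k_def frac_def by simp
  have "0 \<le> \<xi>" "\<xi> < 1" unfolding \<xi> by (auto simp: frac_lt_1)
  moreover have "0 \<le> x" "x \<le> 1" using cantor_set_in_cylinder[OF x, of 0] by auto
  ultimately have "of_int k > (-1::real)" "of_int k < (2::real)" using e assms by linarith+
  hence "k \<in> {0, 1}" by auto
  thus ?thesis using that x e by blast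
qed

text \<open>The level makes cylinders of length about b^-(1+w)j: moving \<xi> within a cylinder
  changes b^j \<xi> by at most the approximation radius b^-wj.\<close>

definition cyl_level :: "nat \<Rightarrow> real \<Rightarrow> nat \<Rightarrow> nat" where
  "cyl_level b w j = nat \<lceil>(1 + w) * log 3 (real b) * real j\<rceil>"

definition cyl_len :: "nat \<Rightarrow> real \<Rightarrow> nat \<Rightarrow> real" where
  "cyl_len b w j = (1/3) ^ cyl_level b w j"

lemma cyl_len_pos: "0 < cyl_len b w j"
  unfolding cyl_len_def by simp

lemma cyl_level_bounds:
  assumes "b \<ge> 2" "w > -1"
  shows "(1 + w) * log 3 (real b) * real j \<le> cyl_level b w j"
    and "cyl_level b w j \<le> (1 + w) * log 3 (real b) * real j + 1"
proof -
  have "0 \<le> (1 + w) * log 3 (real b) * real j" using assms by simp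
  thus "(1 + w) * log 3 (real b) * real j \<le> cyl_level b w j"
    and "cyl_level b w j \<le> (1 + w) * log 3 (real b) * real j + 1"
    unfolding cyl_level_def by linarith+
qed

lemma powr_log_mult: "a > 0 \<Longrightarrow> a \<noteq> 1 \<Longrightarrow> c > 0 \<Longrightarrow> a powr (log a c * y) = c powr y"
  by (simp add: powr_powr[symmetric])

lemma cyl_len_le:
  assumes "b \<ge> 2" "w > -1"
  shows "cyl_len b w j \<le> real b powr (- (1 + w) * real j)"
proof -
  have "cyl_len b w j = 3 powr (- real (cyl_level b w j))"
    unfolding cyl_len_def by (simp add: powr_minus powr_realpow power_one_over inverse_eq_divide)
  also have "\<dots> \<le> 3 powr (log 3 (real b) * (- (1 + w) * real j))"
    using cyl_level_bounds(1)[OF assms, of j] by (intro powr_mono) (auto simp: algebra_simps)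
  also have "\<dots> = real b powr (- (1 + w) * real j)"
    using assms by (intro powr_log_mult) auto
  finally show ?thesis .
qed

lemma eventually_cyl_len_le:
  assumes "b \<ge> 2" "w > -1" "\<delta> > 0"
  obtains J where "\<And>j. j \<ge> J \<Longrightarrow> cyl_len b w j \<le> \<delta>"
proof -
  define r where "r = real b powr (- (1 + w))"
  have r: "0 < r" "r < 1" using assms by (auto simp: r_def powr_less_one)
  obtain J where J: "r ^ J < \<delta>" using real_arch_pow_inv[OF assms(3) r(2)] by blast
  have "cyl_len b w j \<le> \<delta>" if "j \<ge> J" for j
  proof -
    have "cyl_len b w j \<le> real b powr (- (1 + w) * real j)" by (rule cyl_len_le[OF assms(1,2)])
    also have "\<dots> = r ^ j" using assms(1) by (simp add: r_def powr_powr powr_realpow[symmetric])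
    also have "\<dots> \<le> r ^ J" using r that by (intro power_decreasing) auto
    finally show ?thesis using J by simp
  qed
  thus ?thesis using that by blast
qed

lemma two_pow_cyl_level_le:
  assumes "b \<ge> 2" "w > -1"
  shows "2 ^ cyl_level b w j \<le> 2 * real b powr ((1 + w) * kappa * real j)"
proof -
  have kappa: "kappa = log 3 2" unfolding kappa_def log_def ..
  have "(2::real) ^ cyl_level b w j = 2 powr real (cyl_level b w j)"
    by (simp add: powr_realpow)
  also have "\<dots> \<le> 2 powr ((1 + w) * log 3 (real b) * real j + 1)"
    using cyl_level_bounds(2)[OF assms, of j] by (intro powr_mono) auto
  also have "\<dots> = 2 * (3 powr log 3 2) powr ((1 + w) * log 3 (real b) * real j)"
    by (simp add: powr_add)
  also have "\<dots> = 2 * 3 powr (log 3 (real b) * ((1 + w) * kappa * real j))"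
    unfolding kappa powr_powr by (simp add: algebra_simps)
  also have "\<dots> = 2 * real b powr ((1 + w) * kappa * real j)"
    using assms by (simp add: powr_log_mult)
  finally show ?thesis .
qed

section \<open>Hit sets\<close>

definition hit_radius :: "nat \<Rightarrow> real \<Rightarrow> nat \<Rightarrow> real" where
  "hit_radius b w j = real b powr (- w * real j) + real b ^ j * cyl_len b w j"

text \<open>\<alpha> \<in> hit_set b w j m is necessary for some \<xi> \<in> \<alpha> + K coming from the m-th cylinder
  to satisfy \<parallel>b^j \<xi>\<parallel> < b^-wj (see rotation_hit).\<close>

definition hit_set :: "nat \<Rightarrow> real \<Rightarrow> nat \<Rightarrow> nat \<Rightarrow> real set" where
  "hit_set b w j m = {\<alpha> \<in> {0..<1}.
     dist_int (real b ^ j * (\<alpha> + cantor_cyl (cyl_level b w j) m)) < hit_radius b w j}"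

definition hit_weight :: "nat \<Rightarrow> real \<Rightarrow> real \<Rightarrow> nat \<Rightarrow> real \<Rightarrow> real" where
  "hit_weight b w s j \<alpha> =
     (\<Sum>m<2 ^ cyl_level b w j. indicator (hit_set b w j m) \<alpha> * cyl_len b w j powr s)"

lemma hit_radius_pos: "b \<ge> 1 \<Longrightarrow> 0 < hit_radius b w j"
  unfolding hit_radius_def using cyl_len_pos[of b w j] by (intro add_pos_nonneg) auto

lemma hit_radius_le:
  assumes "b \<ge> 2" "w > -1"
  shows "hit_radius b w j \<le> 2 * real b powr (- w * real j)"
proof -
  have "real b ^ j * cyl_len b w j \<le> real b powr real j * real b powr (- (1 + w) * real j)"
    using assms cyl_len_le[OF assms, of j] by (simp add: powr_realpow)
  also have "\<dots> = real b powr (- w * real j)"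
    by (simp add: powr_add[symmetric] algebra_simps)
  finally show ?thesis unfolding hit_radius_def by simp
qed

lemma emeasure_hit_set_le:
  assumes "b \<ge> 1"
  shows "emeasure lborel (hit_set b w j m) \<le> ennreal (8 * hit_radius b w j)"
  using emeasure_dist_int_lt_le[of "b ^ j" "hit_radius b w j"] assms hit_radius_pos[OF assms]
  unfolding hit_set_def by simp

lemma hit_set_sets [measurable]: "hit_set b w j m \<in> sets borel"
  unfolding hit_set_def by measurable

lemma in_hit_set:
  assumes "b \<ge> 1" "0 \<le> \<alpha>" "\<alpha> < 1"
    and "cantor_cyl (cyl_level b w j) m \<le> x" "x \<le> cantor_cyl (cyl_level b w j) m + cyl_len b w j"
    and "dist_int (real b ^ j * (\<alpha> + x)) < real b powr (- w * real j)"
  shows "\<alpha> \<in> hit_set b w j m"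
proof -
  define c where "c = cantor_cyl (cyl_level b w j) m"
  have "dist_int (real b ^ j * (\<alpha> + c))
      \<le> dist_int (real b ^ j * (\<alpha> + x)) + \<bar>real b ^ j * (\<alpha> + c) - real b ^ j * (\<alpha> + x)\<bar>"
    by (rule dist_int_le_add_dist)
  also have "real b ^ j * (\<alpha> + c) - real b ^ j * (\<alpha> + x) = - (real b ^ j * (x - c))"
    by (simp add: algebra_simps)
  also have "\<bar>- (real b ^ j * (x - c))\<bar> = real b ^ j * (x - c)"
    using assms(4) by (simp add: c_def)
  also have "\<dots> \<le> real b ^ j * cyl_len b w j"
    using assms(5) by (intro mult_left_mono) (auto simp: c_def)
  finally show ?thesis
    using assms(2,3,6) unfolding hit_set_def hit_radius_def c_def by simp
qed

lemma rotation_hit: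
  assumes "b \<ge> 1" "0 \<le> \<alpha>" "\<alpha> < 1" "\<xi> \<in> rotate \<alpha> cantorK"
    and "dist_int (real b ^ j * \<xi>) < real b powr (- w * real j)"
  obtains m t where "m < 2 ^ cyl_level b w j" "\<alpha> \<in> hit_set b w j m" "t \<in> {0, 1}"
    "\<xi> \<in> {\<alpha> + cantor_cyl (cyl_level b w j) m - real t ..
          \<alpha> + cantor_cyl (cyl_level b w j) m - real t + cyl_len b w j}"
proof -
  obtain x k where x: "x \<in> cantor_set" and k: "k \<in> {0, 1::int}" and \<xi>: "\<xi> = \<alpha> + x - of_int k"
    using rotate_cantorK_cases[OF assms(2-4)] by blast
  obtain m where m: "m < 2 ^ cyl_level b w j" "cantor_cyl (cyl_level b w j) m \<le> x"
    "x \<le> cantor_cyl (cyl_level b w j) m + cyl_len b w j"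
    using cantor_set_in_cylinder[OF x] unfolding cyl_len_def by blast
  have shift: "real b ^ j * (\<alpha> + x) = real b ^ j * \<xi> + of_int (int (b ^ j) * k)"
    unfolding \<xi> by (simp add: algebra_simps)
  have "dist_int (real b ^ j * (\<alpha> + x)) = dist_int (real b ^ j * \<xi>)"
    by (simp only: shift dist_int_add_of_int)
  hence "\<alpha> \<in> hit_set b w j m" using in_hit_set[OF assms(1-3) m(2,3)] assms(5) by simp
  moreover have "nat k \<in> {0, 1}" "\<xi> \<in> {\<alpha> + cantor_cyl (cyl_level b w j) m - real (nat k) ..
      \<alpha> + cantor_cyl (cyl_level b w j) m - real (nat k) + cyl_len b w j}"
    using k \<xi> m by auto
  ultimately show ?thesis using that m(1) by blast
qed

lemma hit_weight_nonneg: "0 \<le> hit_weight b w s j \<alpha>"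
  unfolding hit_weight_def by (intro sum_nonneg) auto

lemma borel_measurable_hit_weight [measurable]: "hit_weight b w s j \<in> borel_measurable borel"
  unfolding hit_weight_def by measurable

lemma hit_weight_mass_le:
  assumes "b \<ge> 2" "w > -1" "s \<ge> 0"
  shows "2 ^ cyl_level b w j * cyl_len b w j powr s * (8 * hit_radius b w j)
     \<le> 32 * (real b powr ((1 + w) * (kappa - s) - w)) ^ j"
proof -
  have "cyl_len b w j powr s \<le> (real b powr (- (1 + w) * real j)) powr s"
    using assms cyl_len_le[OF assms(1,2)] by (intro powr_mono2) (auto intro: less_imp_le cyl_len_pos)
  hence "2 ^ cyl_level b w j * cyl_len b w j powr s
      \<le> (2 * real b powr ((1 + w) * kappa * real j)) * real b powr (- (1 + w) * real j * s)"
    using two_pow_cyl_level_le[OF assms(1,2)] by (intro mult_mono) (auto simp: powr_powr)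
  moreover have "8 * hit_radius b w j \<le> 16 * real b powr (- w * real j)"
    using hit_radius_le[OF assms(1,2)] by simp
  ultimately have "2 ^ cyl_level b w j * cyl_len b w j powr s * (8 * hit_radius b w j)
      \<le> (2 * real b powr ((1 + w) * kappa * real j)) * real b powr (- (1 + w) * real j * s)
          * (16 * real b powr (- w * real j))"
    by (rule mult_mono) (use hit_radius_pos[of b w j] assms in auto)
  also have "\<dots> = 32 * real b powr (((1 + w) * (kappa - s) - w) * real j)"
    by (simp add: powr_add[symmetric] algebra_simps)
  also have "\<dots> = 32 * (real b powr ((1 + w) * (kappa - s) - w)) ^ j"
    using assms by (simp add: powr_realpow[symmetric] powr_powr)
  finally show ?thesis .
qed

lemma nn_integral_hit_weight_le:
  assumes "b \<ge> 2" "w > -1" "s \<ge> 0"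
  shows "(\<integral>\<^sup>+\<alpha>. hit_weight b w s j \<alpha> \<partial>lborel)
     \<le> ennreal (32 * (real b powr ((1 + w) * (kappa - s) - w)) ^ j)"
proof -
  define n where "n = cyl_level b w j"
  define h where "h = cyl_len b w j powr s"
  have "ennreal (hit_weight b w s j \<alpha>) = (\<Sum>m<2 ^ n. ennreal h * indicator (hit_set b w j m) \<alpha>)"
    for \<alpha>
  proof -
    have "ennreal (hit_weight b w s j \<alpha>) = (\<Sum>m<2 ^ n. ennreal (indicator (hit_set b w j m) \<alpha> * h))"
      unfolding hit_weight_def n_def h_def by (rule sum_ennreal[symmetric]) auto
    also have "\<dots> = (\<Sum>m<2 ^ n. ennreal h * indicator (hit_set b w j m) \<alpha>)"
      by (intro sum.cong refl) (auto simp: indicator_def)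
    finally show ?thesis .
  qed
  hence "(\<integral>\<^sup>+\<alpha>. hit_weight b w s j \<alpha> \<partial>lborel)
      = (\<integral>\<^sup>+\<alpha>. (\<Sum>m<2 ^ n. ennreal h * indicator (hit_set b w j m) \<alpha>) \<partial>lborel)"
    by simp
  also have "\<dots> = (\<Sum>m<2 ^ n. \<integral>\<^sup>+\<alpha>. ennreal h * indicator (hit_set b w j m) \<alpha> \<partial>lborel)"
    by (intro nn_integral_sum) measurable
  also have "\<dots> = (\<Sum>m<2 ^ n. ennreal h * emeasure lborel (hit_set b w j m))"
    by (intro sum.cong refl nn_integral_cmult_indicator) measurable
  also have "\<dots> \<le> (\<Sum>m<(2::nat) ^ n. ennreal h * ennreal (8 * hit_radius b w j))"
    using assms by (intro sum_mono mult_left_mono emeasure_hit_set_le) auto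
  also have "\<dots> = ennreal (2 ^ n * h * (8 * hit_radius b w j))"
    using hit_radius_pos[of b w j] assms
    by (simp add: h_def ennreal_mult[symmetric] ennreal_of_nat_eq_real_of_nat)
  also have "\<dots> \<le> ennreal (32 * (real b powr ((1 + w) * (kappa - s) - w)) ^ j)"
    unfolding n_def h_def by (intro ennreal_leI hit_weight_mass_le[OF assms])
  finally show ?thesis .
qed

lemma AE_summable_hit_weight:
  assumes "b \<ge> 2" "w > -1" "s \<ge> 0" "(1 + w) * (kappa - s) < w"
  shows "AE \<alpha> in lborel. summable (\<lambda>j. hit_weight b w s j \<alpha>)"
proof -
  define q where "q = real b powr ((1 + w) * (kappa - s) - w)"
  have q: "0 \<le> q" "q < 1" unfolding q_def using assms by (auto simp: powr_less_one)
  have "(\<integral>\<^sup>+\<alpha>. (\<Sum>j. ennreal (hit_weight b w s j \<alpha>)) \<partial>lborel)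
      = (\<Sum>j. \<integral>\<^sup>+\<alpha>. hit_weight b w s j \<alpha> \<partial>lborel)"
    by (intro nn_integral_suminf) measurable
  also have "\<dots> \<le> (\<Sum>j. ennreal (32 * q ^ j))"
    unfolding q_def using assms by (intro suminf_le nn_integral_hit_weight_le) auto
  also have "\<dots> = ennreal (\<Sum>j. 32 * q ^ j)"
    using q by (intro suminf_ennreal2) (auto intro!: summable_mult summable_geometric)
  finally have "(\<integral>\<^sup>+\<alpha>. (\<Sum>j. ennreal (hit_weight b w s j \<alpha>)) \<partial>lborel) \<noteq> \<infinity>"
    by (auto simp: top_unique)
  hence "AE \<alpha> in lborel. (\<Sum>j. ennreal (hit_weight b w s j \<alpha>)) \<noteq> \<infinity>"
    by (intro nn_integral_PInf_AE) measurable
  thus ?thesis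
    by eventually_elim (auto intro!: summable_suminf_not_top hit_weight_nonneg)
qed

text \<open>Restricting to rational parameters makes the exceptional set a countable union of null sets.\<close>

definition good_rotation :: "nat \<Rightarrow> real \<Rightarrow> bool" where
  "good_rotation b \<alpha> \<longleftrightarrow> (\<forall>w\<in>\<rat>. \<forall>s\<in>\<rat>. -1 < w \<longrightarrow> 0 \<le> s \<longrightarrow> (1 + w) * (kappa - s) < w \<longrightarrow>
     summable (\<lambda>j. hit_weight b w s j \<alpha>))"

lemma AE_good_rotation:
  assumes "b \<ge> 2"
  shows "AE \<alpha> in lborel. good_rotation b \<alpha>"
proof -
  have "AE \<alpha> in lborel. -1 < w \<longrightarrow> 0 \<le> s \<longrightarrow> (1 + w) * (kappa - s) < w \<longrightarrow>
      summable (\<lambda>j. hit_weight b w s j \<alpha>)" for w s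
    using AE_summable_hit_weight[OF assms, of w s] by (cases "-1 < w \<and> 0 \<le> s \<and> (1 + w) * (kappa - s) < w") auto
  thus ?thesis unfolding good_rotation_def by (simp add: AE_ball_countable countable_rat)
qed

lemma one_le_hit_weight:
  assumes "b \<ge> 1" "0 \<le> \<alpha>" "\<alpha> < 1" "\<xi> \<in> rotate \<alpha> cantorK"
    and "dist_int (real b ^ j * \<xi>) < real b powr (- w * real j)"
  shows "1 \<le> hit_weight b w 0 j \<alpha>"
proof -
  obtain m where m: "m < 2 ^ cyl_level b w j" "\<alpha> \<in> hit_set b w j m"
    using rotation_hit[OF assms] by metis
  have "1 = indicator (hit_set b w j m) \<alpha> * cyl_len b w j powr 0"
    using m(2) cyl_len_pos[of b w j] by simp
  also have "\<dots> \<le> hit_weight b w 0 j \<alpha>"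
    unfolding hit_weight_def using m(1) by (intro member_le_sum) auto
  finally show ?thesis .
qed

text \<open>The index k = 2 m + t encodes the hit cylinder m together with the carry t \<in> {0, 1}
  of the rotation modulo 1.\<close>

definition hit_cover :: "nat \<Rightarrow> real \<Rightarrow> real \<Rightarrow> nat \<Rightarrow> nat \<Rightarrow> real set" where
  "hit_cover b w \<alpha> j k =
     (if k < 2 * 2 ^ cyl_level b w j \<and> \<alpha> \<in> hit_set b w j (k div 2)
      then {\<alpha> + cantor_cyl (cyl_level b w j) (k div 2) - real (k mod 2) ..
            \<alpha> + cantor_cyl (cyl_level b w j) (k div 2) - real (k mod 2) + cyl_len b w j}
      else {})"

lemma hit_cover_covers:
  assumes "b \<ge> 1" "0 \<le> \<alpha>" "\<alpha> < 1" "\<xi> \<in> rotate \<alpha> cantorK"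
    and "dist_int (real b ^ j * \<xi>) < real b powr (- w * real j)"
  shows "\<exists>k. \<xi> \<in> hit_cover b w \<alpha> j k"
proof -
  obtain m t where m: "m < 2 ^ cyl_level b w j" "\<alpha> \<in> hit_set b w j m" and t: "t \<in> {0, 1}"
    and \<xi>: "\<xi> \<in> {\<alpha> + cantor_cyl (cyl_level b w j) m - real t ..
          \<alpha> + cantor_cyl (cyl_level b w j) m - real t + cyl_len b w j}"
    using rotation_hit[OF assms] .
  have "(2 * m + t) div 2 = m" "(2 * m + t) mod 2 = t" "2 * m + t < 2 * 2 ^ cyl_level b w j"
    using t m(1) by auto
  hence "\<xi> \<in> hit_cover b w \<alpha> j (2 * m + t)" using m(2) \<xi> unfolding hit_cover_def by simp
  thus ?thesis ..
qed

lemma diameter_hit_cover_le: "bounded (hit_cover b w \<alpha> j k) \<and> diameter (hit_cover b w \<alpha> j k) \<le> cyl_len b w j"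
  unfolding hit_cover_def using cyl_len_pos[of b w j] by auto

lemma suminf_diameter_hit_cover:
  "(\<Sum>k. ennreal (diameter (hit_cover b w \<alpha> j k) powr s)) = ennreal (2 * hit_weight b w s j \<alpha>)"
proof -
  define N :: nat where "N = 2 ^ cyl_level b w j"
  define \<phi> where "\<phi> m = indicator (hit_set b w j m) \<alpha> * cyl_len b w j powr s" for m
  have "diameter (hit_cover b w \<alpha> j k) powr s = (if k < 2 * N then \<phi> (k div 2) else 0)" for k
    unfolding hit_cover_def \<phi>_def N_def using cyl_len_pos[of b w j] by (auto simp: indicator_def)
  hence "(\<Sum>k. ennreal (diameter (hit_cover b w \<alpha> j k) powr s)) = (\<Sum>k<2 * N. ennreal (\<phi> (k div 2)))"
    by (subst suminf_finite[of "{..<2 * N}"]) auto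
  also have "\<dots> = ennreal (\<Sum>k<2 * N. \<phi> (k div 2))"
    by (rule sum_ennreal) (simp add: \<phi>_def)
  also have "(\<Sum>k<2 * N. \<phi> (k div 2)) = 2 * hit_weight b w s j \<alpha>"
    using sum_split_even_odd[where f = "\<lambda>k. \<phi> (k div 2)" and g = "\<lambda>k. \<phi> (k div 2)" and n = N]
    unfolding hit_weight_def \<phi>_def N_def by simp
  finally show ?thesis .
qed

lemma hausdorff_measure_eq_0_if_frequently_hit:
  assumes "b \<ge> 2" "0 \<le> \<alpha>" "\<alpha> < 1" "w > -1" "summable (\<lambda>j. hit_weight b w s j \<alpha>)"
    and "E \<subseteq> rotate \<alpha> cantorK"
    and "\<And>\<xi>. \<xi> \<in> E \<Longrightarrow> infinite {j. dist_int (real b ^ j * \<xi>) < real b powr (- w * real j)}"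
  shows "hausdorff_measure s E = 0"
proof (rule hausdorff_measure_eq_0I)
  fix \<delta> \<epsilon> :: real assume "\<delta> > 0" "\<epsilon> > 0"
  obtain J1 where J1: "\<And>n. n \<ge> J1 \<Longrightarrow> norm (\<Sum>i. hit_weight b w s (i + n) \<alpha>) < \<epsilon> / 2"
    using suminf_exist_split[OF _ assms(5), of "\<epsilon> / 2"] \<open>\<epsilon> > 0\<close> by auto
  obtain J2 where J2: "\<And>j. j \<ge> J2 \<Longrightarrow> cyl_len b w j \<le> \<delta>"
    using eventually_cyl_len_le[OF assms(1,4) \<open>\<delta> > 0\<close>] by blast
  define J where "J = max J1 J2"
  define V where "V j k = hit_cover b w \<alpha> (j + J) k" for j k
  have "E \<subseteq> (\<Union>j k. V j k)"
  proof
    fix \<xi> assume "\<xi> \<in> E"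
    then obtain j where "j \<ge> J" "dist_int (real b ^ j * \<xi>) < real b powr (- w * real j)"
      using assms(7) by (metis (mono_tags, lifting) infinite_nat_iff_unbounded_le mem_Collect_eq)
    moreover have "\<xi> \<in> rotate \<alpha> cantorK" using \<open>\<xi> \<in> E\<close> assms(6) by blast
    ultimately obtain k where "\<xi> \<in> V (j - J) k"
      using hit_cover_covers[OF _ assms(2,3)] assms(1) unfolding V_def by fastforce
    thus "\<xi> \<in> (\<Union>j k. V j k)" by blast
  qed
  moreover have "bounded (V j k) \<and> diameter (V j k) \<le> \<delta>" for j k
    using diameter_hit_cover_le[of b w \<alpha> "j + J" k] J2[of "j + J"] unfolding V_def J_def
    by fastforce
  ultimately have "hausdorff_pre s \<delta> E \<le> (\<Sum>j. \<Sum>k. ennreal (diameter (V j k) powr s))"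
    by (rule hausdorff_pre_le_double_cover)
  also have "\<dots> = (\<Sum>j. ennreal (2 * hit_weight b w s (j + J) \<alpha>))"
    unfolding V_def suminf_diameter_hit_cover ..
  also have "\<dots> = ennreal (2 * (\<Sum>j. hit_weight b w s (j + J) \<alpha>))"
    using summable_ignore_initial_segment[OF assms(5), of J]
    by (subst suminf_ennreal2) (auto intro: hit_weight_nonneg simp: suminf_mult)
  also have "\<dots> \<le> ennreal \<epsilon>"
    using J1[of J] by (intro ennreal_leI) (simp add: J_def)
  finally show "hausdorff_pre s \<delta> E \<le> ennreal \<epsilon>" .
qed

section \<open>Almost every rotation\<close>

lemma vb_rotated_cantor_le:
  assumes "b \<ge> 2" "0 \<le> \<alpha>" "\<alpha> < 1" "good_rotation b \<alpha>" "\<xi> \<in> rotate \<alpha> cantorK"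
  shows "vb b \<xi> \<le> ereal (kappa / (1 - kappa))"
proof (rule ccontr)
  assume "\<not> vb b \<xi> \<le> ereal (kappa / (1 - kappa))"
  then obtain u where u: "kappa / (1 - kappa) < u" "ereal u < vb b \<xi>"
    using ereal_dense2 by (metis less_ereal.simps(1) not_le)
  then obtain w where w: "w \<in> \<rat>" "kappa / (1 - kappa) < w" "w < u"
    using Rats_dense_in_real by blast
  have "kappa < w * (1 - kappa)"
    using w(2) kappa_less_1 by (simp add: divide_less_eq)
  hence "(1 + w) * (kappa - 0) < w" by (simp add: algebra_simps)
  moreover have "-1 < w" using w(2) kappa_pos kappa_less_1 by (smt (verit) divide_pos_pos)
  ultimately have "summable (\<lambda>j. hit_weight b w 0 j \<alpha>)"
    using assms(4) w(1) unfolding good_rotation_def by auto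
  hence "(\<lambda>j. hit_weight b w 0 j \<alpha>) \<longlonglongrightarrow> 0" by (rule summable_LIMSEQ_zero)
  hence "eventually (\<lambda>j. hit_weight b w 0 j \<alpha> < 1) sequentially"
    by (rule order_tendstoD) simp
  then obtain N where N: "\<And>j. j \<ge> N \<Longrightarrow> hit_weight b w 0 j \<alpha> < 1"
    unfolding eventually_sequentially by blast
  have "infinite {j. dist_int (real b ^ j * \<xi>) < real b powr (- w * real j)}"
    using u(2) w(3) by (intro infinite_approximations_if_less_vb[OF assms(1)])
      (metis less_ereal.simps(1) order_less_trans)
  then obtain j where j: "j \<ge> N" "dist_int (real b ^ j * \<xi>) < real b powr (- w * real j)"
    by (metis (mono_tags, lifting) infinite_nat_iff_unbounded_le mem_Collect_eq)
  have "1 \<le> hit_weight b w 0 j \<alpha>"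
    using assms(1) by (intro one_le_hit_weight[OF _ assms(2,3,5) j(2)]) simp
  thus False using N[OF j(1)] by simp
qed

lemma hausdorff_dim_Vb_rotated_cantor_le:
  assumes "b \<ge> 2" "0 \<le> \<alpha>" "\<alpha> < 1" "good_rotation b \<alpha>" "0 \<le> v" "v \<le> kappa / (1 - kappa)"
  shows "hausdorff_dim (Vb b v \<inter> rotate \<alpha> cantorK) \<le> ereal (1 / (v + 1) + kappa - 1)"
proof (rule hausdorff_dim_le_if_rat_null[OF dim_bound_nonneg[OF assms(5,6)]])
  fix s assume s: "s \<in> \<rat>" "1 / (v + 1) + kappa - 1 < s"
  obtain w where w: "w \<in> \<rat>" "-1 < w" "w < v" "(1 + w) * (kappa - s) < w"
    using rat_exponent_below[OF assms(5) s(2)] .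
  have "0 \<le> s" using s(2) dim_bound_nonneg[OF assms(5,6)] by linarith
  hence "summable (\<lambda>j. hit_weight b w s j \<alpha>)"
    using assms(4) w s(1) unfolding good_rotation_def by blast
  thus "hausdorff_measure s (Vb b v \<inter> rotate \<alpha> cantorK) = 0"
  proof (rule hausdorff_measure_eq_0_if_frequently_hit[OF assms(1-3) w(2)])
    fix \<xi> assume "\<xi> \<in> Vb b v \<inter> rotate \<alpha> cantorK"
    hence "ereal v \<le> vb b \<xi>" unfolding Vb_def by auto
    hence "ereal w < vb b \<xi>" using w(3) by (metis less_ereal.simps(1) order_less_le_trans)
    thus "infinite {j. dist_int (real b ^ j * \<xi>) < real b powr (- w * real j)}"
      by (rule infinite_approximations_if_less_vb[OF assms(1)])
  qed simp
qed

theorem theorem2p3: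
  fixes b :: nat
  assumes "b \<ge> 2"
  shows "AE \<alpha> in lborel. \<alpha> \<in> circle \<longrightarrow>
    ((\<forall>\<xi> \<in> rotate \<alpha> cantorK. 0 \<le> vb b \<xi> \<and> vb b \<xi> \<le> ereal (kappa / (1 - kappa))) \<and>
     (\<forall>v::real. 0 \<le> v \<and> v \<le> kappa / (1 - kappa) \<longrightarrow>
        hausdorff_dim (Vb b v \<inter> rotate \<alpha> cantorK) \<le> ereal (1 / (v + 1) + kappa - 1)))"
  using AE_good_rotation[OF assms]
proof eventually_elim
  case (elim \<alpha>)
  show ?case
    using vb_nonneg[OF assms] vb_rotated_cantor_le[OF assms _ _ elim]
      hausdorff_dim_Vb_rotated_cantor_le[OF assms _ _ elim]
    unfolding circle_def by auto
qed

end
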